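(* Let $\sqrt{2} = (1.b_1 b_2 b_3 \cdots)_2$ be the binary expansion of $\sqrt 2$. For integers $n \geq 2$, let $L_n(x) = \left\lfloor \frac{x(2^n - x)}{2^{n-2}} \right\rfloor$ for $x \in X_n = \{1, 2, \dots, 2^n - 1\}$, call $n$ undesirable if there exists $x \in X_n$ with $L_n(x) = 2^{n-1}$, and let $d_N$ be the number of undesirable $n$ with $2 \le n \leq N$. If $\sqrt 2$ is simply normal to base $2$, i.e. $\lim_{n \to \infty} \frac{1}{n}\#\{1 \le i \le n : b_i = 0\} = 1/2$, then $\liminf_{N \to \infty} d_N / N \geq 1/6$. *)

theory Defs
  imports "HOL-Analysis.Analysis"
begin

text \<open>i-th binary digit of sqrt 2 after the binary point (i \<ge> 1): sqrt 2 = (1.b_1 b_2 ...)_2.\<close>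
definition sqrt2_bit :: "nat \<Rightarrow> int" where
  "sqrt2_bit i = \<lfloor>sqrt 2 * 2 ^ i\<rfloor> mod 2"

definition L :: "nat \<Rightarrow> nat \<Rightarrow> int" where
  "L n x = \<lfloor>real x * (2 ^ n - real x) / 2 ^ (n - 2)\<rfloor>"

definition X :: "nat \<Rightarrow> nat set" where
  "X n = {1..2 ^ n - 1}"

definition undesirable :: "nat \<Rightarrow> bool" where
  "undesirable n \<longleftrightarrow> (\<exists>x \<in> X n. L n x = 2 ^ (n - 1))"

definition d :: "nat \<Rightarrow> nat" where
  "d N = card {n. 2 \<le> n \<and> n \<le> N \<and> undesirable n}"

definition sqrt2_simply_normal :: bool where
  "sqrt2_simply_normal \<longleftrightarrow>
     (\<lambda>n. real (card {i. 1 \<le> i \<and> i \<le> n \<and> sqrt2_bit i = 0}) / real n) \<longlonglongrightarrow> 1 / 2"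

end

theory Submission imports Defs begin

text \<open>
  If the five binary digits of \<open>\<surd>2\<close> following position \<open>m\<close> form a number at most 10, then
  \<open>u = \<lfloor>2\<^sup>m \<surd>2\<rfloor>\<close> satisfies \<open>2\<^sup>m \<surd>2 - u < 11/32\<close>, hence \<open>2\<cdot>4\<^sup>m - 2\<^sup>m < u\<^sup>2 \<le> 2\<cdot>4\<^sup>m\<close>,
  and \<open>x = 2\<^sup>m\<^sup>+\<^sup>1 - u\<close> witnesses that \<open>m + 2\<close> is undesirable.  Such "small windows" are exactly
  those starting with 00, 0100 or 01010; a bounded potential on four consecutive digits shows
  that every digit 0 earns 10 units, every position costs 4 and every small window pays at most 6,
  so simple normality forces the small windows to have lower density at least \<open>(10/2 - 4)/6 = 1/6\<close>.
\<close>

lemma sqrt2_bit_cases: "sqrt2_bit i = 0 \<or> sqrt2_bit i = 1"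
  unfolding sqrt2_bit_def by auto

lemma floor_double:
  fixes y :: real
  shows "\<lfloor>2 * y\<rfloor> = 2 * \<lfloor>y\<rfloor> + \<lfloor>2 * y\<rfloor> mod 2"
proof -
  have "\<lfloor>y\<rfloor> \<le> y" "y < \<lfloor>y\<rfloor> + 1" "\<lfloor>2 * y\<rfloor> \<le> 2 * y" "2 * y < \<lfloor>2 * y\<rfloor> + 1"
    by linarith+
  then have "\<lfloor>2 * y\<rfloor> = 2 * \<lfloor>y\<rfloor> \<or> \<lfloor>2 * y\<rfloor> = 2 * \<lfloor>y\<rfloor> + 1"
    by linarith
  then show ?thesis by auto
qed

definition sqrt2_floor :: "nat \<Rightarrow> int" where
  "sqrt2_floor i = \<lfloor>sqrt 2 * 2 ^ i\<rfloor>"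

lemma sqrt2_floor_Suc: "sqrt2_floor (Suc i) = 2 * sqrt2_floor i + sqrt2_bit (Suc i)"
  using floor_double[of "sqrt 2 * 2 ^ i"]
  by (simp add: sqrt2_floor_def sqrt2_bit_def mult.left_commute)

definition window :: "nat \<Rightarrow> int" where
  "window i = 16 * sqrt2_bit i + 8 * sqrt2_bit (i + 1) + 4 * sqrt2_bit (i + 2)
     + 2 * sqrt2_bit (i + 3) + sqrt2_bit (i + 4)"

lemma sqrt2_floor_add5: "sqrt2_floor (m + 5) = 32 * sqrt2_floor m + window (m + 1)"
  by (simp add: numeral_eq_Suc sqrt2_floor_Suc window_def algebra_simps)

lemma sqrt2_approx_if_window_le:
  assumes "window (m + 1) \<le> 10"
  shows "sqrt 2 * 2 ^ m - sqrt2_floor m < 11 / 32"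
proof -
  have "sqrt 2 * 2 ^ (m + 5) < sqrt2_floor (m + 5) + 1"
    unfolding sqrt2_floor_def by linarith
  also have "\<dots> \<le> 32 * sqrt2_floor m + 11"
    using assms by (simp add: sqrt2_floor_add5)
  finally show ?thesis by (simp add: power_add)
qed

lemma sqrt_2_lt_16_div_11: "sqrt 2 < 16 / 11"
  by (rule real_less_lsqrt) (simp_all add: power2_eq_square)

lemma square_between_if_sqrt2_approx:
  fixes u P :: real
  assumes "P > 0" "0 \<le> u" "u \<le> sqrt 2 * P" "sqrt 2 * P - u < 11 / 32"
  shows "2 * P\<^sup>2 - P < u\<^sup>2" "u\<^sup>2 \<le> 2 * P\<^sup>2"
proof -
  have s2: "(sqrt 2 * P)\<^sup>2 = 2 * P\<^sup>2"
    by (simp add: power_mult_distrib)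
  show "u\<^sup>2 \<le> 2 * P\<^sup>2"
    using power_mono[OF assms(3,2), of 2] s2 by simp
  have "(sqrt 2 * P)\<^sup>2 - u\<^sup>2 = (sqrt 2 * P - u) * (sqrt 2 * P + u)"
    by (simp add: algebra_simps power2_eq_square)
  also have "\<dots> \<le> 11 / 32 * (2 * (sqrt 2 * P))"
    using assms by (intro mult_mono) (auto simp: mult.commute)
  also have "\<dots> < P"
    using sqrt_2_lt_16_div_11 assms(1) by simp
  finally show "2 * P\<^sup>2 - P < u\<^sup>2"
    using s2 by simp
qed

lemma undesirable_if_square_between:
  fixes u :: int
  assumes "0 \<le> u" "u < 2 ^ (m + 1)" "2 * 4 ^ m - 2 ^ m < u\<^sup>2" "u\<^sup>2 \<le> 2 * 4 ^ m"
  shows "undesirable (m + 2)"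
proof -
  define P :: real where "P = 2 ^ m"
  have P: "P > 0" "(2::real) ^ (m + 1) = 2 * P" "(2::real) ^ (m + 2) = 4 * P" "(4::real) ^ m = P\<^sup>2"
    by (simp_all add: P_def power_add power2_eq_square flip: power_mult_distrib)
  define x where "x = nat (2 ^ (m + 1) - u)"
  have x: "real x = 2 * P - u"
    using assms(2) P(2) by (simp add: x_def)
  have "x \<in> X (m + 2)"
    using assms(1,2) by (simp add: X_def x_def nat_le_iff)
  moreover have "L (m + 2) x = 2 ^ (m + 1)"
  proof -
    have quotient: "real x * (2 ^ (m + 2) - real x) / 2 ^ (m + 2 - 2) = (4 * P\<^sup>2 - u\<^sup>2) / P"
      by (simp add: x P P_def[symmetric] power2_eq_square algebra_simps)
    have "2 * P\<^sup>2 - P < (real_of_int u)\<^sup>2" "(real_of_int u)\<^sup>2 \<le> 2 * P\<^sup>2"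
    proof -
      have "real_of_int (2 * 4 ^ m - 2 ^ m) < of_int (u\<^sup>2)" "real_of_int (u\<^sup>2) \<le> of_int (2 * 4 ^ m)"
        using assms(3,4) by (simp_all only: of_int_less_iff of_int_le_iff)
      then show "2 * P\<^sup>2 - P < (real_of_int u)\<^sup>2" "(real_of_int u)\<^sup>2 \<le> 2 * P\<^sup>2"
        using P(4) by (simp_all add: P_def)
    qed
    then have "2 * P \<le> (4 * P\<^sup>2 - u\<^sup>2) / P" "(4 * P\<^sup>2 - u\<^sup>2) / P < 2 * P + 1"
      using P(1) by (simp_all add: field_simps power2_eq_square)
    moreover have "real_of_int (2 ^ (m + 1)) = 2 * P"
      using P(2) by simp
    ultimately show ?thesis
      unfolding L_def quotient by (intro floor_unique) simp_all
  qed
  ultimately show ?thesis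
    unfolding undesirable_def by auto
qed

lemma undesirable_if_window_le:
  assumes "window (m + 1) \<le> 10"
  shows "undesirable (m + 2)"
proof -
  define u where "u = sqrt2_floor m"
  have u: "0 \<le> real_of_int u" "real_of_int u \<le> sqrt 2 * 2 ^ m"
    by (simp_all add: u_def sqrt2_floor_def)
  have "sqrt 2 * 2 ^ m < (2::real) * 2 ^ m"
    by (simp add: real_less_lsqrt)
  then have "real_of_int u < 2 * 2 ^ m"
    using u(2) by linarith
  then have "real_of_int u < of_int (2 ^ (m + 1))"
    by simp
  then have "u < 2 ^ (m + 1)"
    by (simp only: of_int_less_iff)
  moreover have "real_of_int (2 * 4 ^ m - 2 ^ m) < of_int (u\<^sup>2)"
    "real_of_int (u\<^sup>2) \<le> of_int (2 * 4 ^ m)"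
    using square_between_if_sqrt2_approx[OF _ u sqrt2_approx_if_window_le[OF assms, folded u_def]]
    by (simp_all add: power2_eq_square flip: power_mult_distrib)
  then have "2 * 4 ^ m - 2 ^ m < u\<^sup>2" "u\<^sup>2 \<le> 2 * 4 ^ m"
    by (simp_all only: of_int_less_iff of_int_le_iff)
  ultimately show ?thesis
    using u(1) by (intro undesirable_if_square_between) simp_all
qed

text \<open>A potential on the next four digits that, after telescoping, bounds the balance
  \<open>10\<cdot>[digit 0] - 4\<close> of each position by \<open>6\<cdot>[window \<le> 10]\<close>; its values are read off from
  the worst cases among the 32 windows of five digits.\<close>

definition window_potential :: "int \<Rightarrow> int \<Rightarrow> int \<Rightarrow> int \<Rightarrow> int" where
  "window_potential a b c e =
     (if a = 0 then (if b = 1 \<and> c = 1 then -2 else 0)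
      else if b = 1 then -8 else if c = 1 \<and> e = 1 then -6 else -4)"

lemma window_potential_step:
  assumes "a = 0 \<or> a = 1" "b = 0 \<or> b = 1" "c = 0 \<or> c = 1" "e = 0 \<or> e = 1" "f = 0 \<or> f = 1"
  shows "10 * of_bool (a = 0) - 4 + window_potential b c e f - window_potential a b c e
           \<le> 6 * of_bool (16 * a + 8 * b + 4 * c + 2 * e + f \<le> 10)"
  using assms by (elim disjE) (simp_all add: window_potential_def)

definition digit_potential :: "nat \<Rightarrow> int" where
  "digit_potential j =
     window_potential (sqrt2_bit j) (sqrt2_bit (j + 1)) (sqrt2_bit (j + 2)) (sqrt2_bit (j + 3))"

lemma digit_potential_bounds: "-8 \<le> digit_potential j" "digit_potential j \<le> 0"
  unfolding digit_potential_def window_potential_def by auto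

lemma digit_potential_step:
  "10 * of_bool (sqrt2_bit i = 0) - 4 + digit_potential (Suc i) - digit_potential i
     \<le> 6 * of_bool (window i \<le> 10)"
proof -
  have "digit_potential (Suc i) =
      window_potential (sqrt2_bit (i + 1)) (sqrt2_bit (i + 2)) (sqrt2_bit (i + 3)) (sqrt2_bit (i + 4))"
    by (simp add: digit_potential_def numeral_eq_Suc)
  then show ?thesis
    unfolding digit_potential_def[of i] window_def
    by (rule ssubst) (rule window_potential_step[OF sqrt2_bit_cases sqrt2_bit_cases sqrt2_bit_cases
          sqrt2_bit_cases sqrt2_bit_cases])
qed

lemma card_eq_sum_of_bool:
  fixes M :: nat
  shows "int (card {i. 1 \<le> i \<and> i \<le> M \<and> P i}) = (\<Sum>i = 1..M. of_bool (P i))"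
proof -
  have "{i. 1 \<le> i \<and> i \<le> M \<and> P i} = {1..M} \<inter> {i. P i}"
    by auto
  then show ?thesis
    by simp
qed

lemma zeros_bounded_by_small_windows:
  "10 * int (card {i. 1 \<le> i \<and> i \<le> M \<and> sqrt2_bit i = 0}) - 4 * int M - 8
     \<le> 6 * int (card {i. 1 \<le> i \<and> i \<le> M \<and> window i \<le> 10})"
proof -
  have "(\<Sum>i = 1..M. (10 * of_bool (sqrt2_bit i = 0) - 4) + (digit_potential (Suc i) - digit_potential i))
          \<le> (\<Sum>i = 1..M. 6 * of_bool (window i \<le> 10))"
    using digit_potential_step by (intro sum_mono) (simp add: algebra_simps del: sum_of_bool_eq)
  moreover have "(\<Sum>i = 1..M. digit_potential (Suc i) - digit_potential i)
      = digit_potential (Suc M) - digit_potential 1"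
    by (rule sum_Suc_diff) simp
  moreover have "-8 \<le> digit_potential (Suc M) - digit_potential 1"
    using digit_potential_bounds(1)[of "Suc M"] digit_potential_bounds(2)[of 1] by linarith
  ultimately show ?thesis
    unfolding card_eq_sum_of_bool sum.distrib by (simp add: sum_subtractf sum_distrib_left)
qed

lemma small_windows_le_undesirable:
  "card {i. 1 \<le> i \<and> i \<le> N \<and> window i \<le> 10} \<le> d N + 1"
proof -
  define S where "S = {i. 1 \<le> i \<and> i \<le> N \<and> window i \<le> 10}"
  define U where "U = {n. 2 \<le> n \<and> n \<le> N \<and> undesirable n}"
  have "Suc ` S \<subseteq> insert (Suc N) U"
  proof
    fix n assume "n \<in> Suc ` S"
    then obtain i where i: "n = Suc i" "1 \<le> i" "i \<le> N" "window (i - 1 + 1) \<le> 10"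
      by (auto simp: S_def)
    then have "undesirable n"
      using undesirable_if_window_le[OF i(4)] by simp
    then show "n \<in> insert (Suc N) U"
      using i by (auto simp: U_def)
  qed
  have "finite U"
    by (simp add: U_def)
  have "card S = card (Suc ` S)"
    by (simp add: card_image)
  also have "\<dots> \<le> card (insert (Suc N) U)"
    using \<open>Suc ` S \<subseteq> insert (Suc N) U\<close> \<open>finite U\<close> by (intro card_mono) simp_all
  also have "\<dots> \<le> card U + 1"
    using \<open>finite U\<close> by (simp add: card_insert_if)
  finally show ?thesis
    by (simp add: S_def U_def d_def)
qed

lemma zeros_bounded_by_undesirable:
  "10 * int (card {i. 1 \<le> i \<and> i \<le> N \<and> sqrt2_bit i = 0}) - 4 * int N - 14 \<le> 6 * int (d N)"
  using zeros_bounded_by_small_windows[of N] small_windows_le_undesirable[of N] by linarith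

lemma Liminf_ge_if_tendsto_minorant:
  fixes f g :: "'a \<Rightarrow> real"
  assumes "F \<noteq> bot" "(f \<longlongrightarrow> l) F" "\<forall>\<^sub>F n in F. f n \<le> g n"
  shows "ereal l \<le> Liminf F (\<lambda>n. ereal (g n))"
proof -
  have "Liminf F (\<lambda>n. ereal (f n)) = ereal l"
    using assms(1,2) by (intro lim_imp_Liminf tendsto_ereal)
  moreover have "Liminf F (\<lambda>n. ereal (f n)) \<le> Liminf F (\<lambda>n. ereal (g n))"
    using assms(3) by (intro Liminf_mono) (auto elim: eventually_mono)
  ultimately show ?thesis by simp
qed

theorem corollary3p4:
  assumes "sqrt2_simply_normal"
  shows "Liminf sequentially (\<lambda>N. ereal (real (d N) / real N)) \<ge> ereal (1 / 6)"
proof -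
  define Z where "Z N = real (card {i. 1 \<le> i \<and> i \<le> N \<and> sqrt2_bit i = 0})" for N
  have "(\<lambda>N. Z N / real N) \<longlonglongrightarrow> 1 / 2"
    using assms unfolding sqrt2_simply_normal_def Z_def .
  then have "(\<lambda>N. 5 / 3 * (Z N / real N) - 2 / 3 - 7 / 3 * inverse (real N))
      \<longlonglongrightarrow> 5 / 3 * (1 / 2) - 2 / 3 - 7 / 3 * 0"
    by (intro tendsto_diff tendsto_mult_left tendsto_const lim_inverse_n)
  moreover have "5 / 3 * (Z N / real N) - 2 / 3 - 7 / 3 * inverse (real N) \<le> real (d N) / real N"
    if "N \<ge> 1" for N
  proof -
    have "5 / 3 * (Z N / real N) - 2 / 3 - 7 / 3 * inverse (real N)
        = (10 * Z N - 4 * real N - 14) / (6 * real N)"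
      using that by (simp add: field_simps)
    also have "\<dots> \<le> 6 * real (d N) / (6 * real N)"
      using zeros_bounded_by_undesirable[of N] unfolding Z_def by (intro divide_right_mono) linarith+
    finally show ?thesis
      by simp
  qed
  ultimately show ?thesis
    by (intro Liminf_ge_if_tendsto_minorant eventually_sequentiallyI) simp_all
qed

end
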